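(* Let $2n$ nodes be placed independently and uniformly at random in a rectangle of dimensions $2\sqrt{A}\times\sqrt{A}$, and let $c$ be a constant independent of $n$ and $A$ with $0<c<1/(7\sqrt{e})$. Then, with probability tending to $1$ as $n\to\infty$, there exists a cut with the following properties: (i) the cut is a curve running from the top side to the bottom side of the rectangle, separating it into a left part and a right part; it need not be a straight line; (ii) it lies within a vertical slab of width $L = c\sqrt{A/n}\,\log n$ located in the middle of the rectangle; (iii) no node lies at distance smaller than $\frac{c}{2}\sqrt{A/n}$ from the cut, on either side. *)

theory Defs
  imports "HOL-Probability.Probability"
begin

text \<open>Top side: y = sqrt A; bottom side: y = 0;
  left side: x = 0; right side: x = 2 sqrt A.\<close>
definition rect :: "real \<Rightarrow> (real \<times> real) set" where
  "rect A = cbox (0, 0) (2 * sqrt A, sqrt A)"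

definition node_space :: "real \<Rightarrow> nat \<Rightarrow> (nat \<Rightarrow> real \<times> real) measure" where
  "node_space A n = PiM {..<2 * n} (\<lambda>_. uniform_measure lborel (rect A))"

definition is_cut :: "real \<Rightarrow> (real \<Rightarrow> real \<times> real) \<Rightarrow> bool" where
  "is_cut A \<gamma> \<longleftrightarrow>
     path \<gamma> \<and> path_image \<gamma> \<subseteq> rect A \<and>
     snd (pathstart \<gamma>) = sqrt A \<and> snd (pathfinish \<gamma>) = 0 \<and>
     (\<forall>g. path g \<and> path_image g \<subseteq> rect A \<and> fst (pathstart g) = 0 \<and>
          fst (pathfinish g) = 2 * sqrt A \<longrightarrow> path_image g \<inter> path_image \<gamma> \<noteq> {})"

definition mid_slab :: "real \<Rightarrow> real \<Rightarrow> (real \<times> real) set" where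
  "mid_slab A L = {p. \<bar>fst p - sqrt A\<bar> \<le> L / 2}"

definition good_config :: "real \<Rightarrow> real \<Rightarrow> nat \<Rightarrow> (nat \<Rightarrow> real \<times> real) \<Rightarrow> bool" where
  "good_config A c n \<omega> \<longleftrightarrow>
     (\<exists>\<gamma>. is_cut A \<gamma> \<and>
          path_image \<gamma> \<subseteq> mid_slab A (c * sqrt (A / n) * ln n) \<and>
          (\<forall>i<2 * n. infdist (\<omega> i) (path_image \<gamma>) \<ge> c / 2 * sqrt (A / n)))"

end

theory Submission
  imports Defs
begin

text \<open>Put a closed disc of radius \<open>s / 2\<close> around every node, where \<open>s = c \<surd>(A/n)\<close>. If some path
  inside the middle slab runs from above to below all discs while avoiding them, its part inside the
  rectangle is the required cut; it separates left from right by Fashoda's theorem. Otherwise a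
  connected component of the union of the discs with the two half-planes outside the slab blocks
  every such path, and therefore meets both half-planes; walking through overlapping discs yields
  distinct nodes, consecutive ones at distance at most \<open>s\<close>, spanning the slab width
  \<open>L = s ln n\<close>, hence at least \<open>ln n\<close> of them.

  Tiling the rectangle by squares of side \<open>s\<close>, such a chain of \<open>K + 1 \<approx> ln n\<close> nodes occupies a walk of
  king moves through the squares. A union bound over the choice of nodes, starting square and moves
  bounds the probability by \<open>(6n/c\<^sup>2) \<cdot> 9\<^sup>K \<cdot> (2n \<cdot> s\<^sup>2/(2A))\<^sup>K\<^sup>+\<^sup>1 = 6n (9c\<^sup>2)\<^sup>K\<close>, and
  \<open>9c\<^sup>2 < e\<^sup>-\<^sup>2\<close> makes this \<open>O(1/n)\<close>.\<close>

section \<open>Fashoda's theorem for pairs of reals\<close>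

definition vec_of_pair :: "real \<times> real \<Rightarrow> real^2" where
  "vec_of_pair p = (\<chi> i. if i = 1 then fst p else snd p)"

lemma vec_of_pair_nth [simp]: "vec_of_pair p $ 1 = fst p" "vec_of_pair p $ 2 = snd p"
  by (simp_all add: vec_of_pair_def)

lemma inj_vec_of_pair: "inj vec_of_pair"
  by (rule injI) (metis vec_of_pair_nth prod_eq_iff)

lemma continuous_on_vec_of_pair: "continuous_on S vec_of_pair"
  unfolding vec_of_pair_def
proof (intro continuous_on_vec_lambda)
  fix i :: 2
  show "continuous_on S (\<lambda>x. if i = 1 then fst x else snd x)"
    by (cases "i = 1") (simp_all add: continuous_on_fst continuous_on_snd)
qed

lemma vec_of_pair_in_cbox_iff:
  "vec_of_pair p \<in> cbox (vec_of_pair a) (vec_of_pair b) \<longleftrightarrow> p \<in> cbox a b"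
  by (cases a; cases b; cases p) (auto simp: mem_box_cart forall_2)

lemma fashoda_prod:
  fixes f g :: "real \<Rightarrow> real \<times> real"
  assumes "path f" "path g" and "path_image f \<subseteq> cbox a b" "path_image g \<subseteq> cbox a b"
    and "fst (pathstart f) = fst a" "fst (pathfinish f) = fst b"
    and "snd (pathstart g) = snd a" "snd (pathfinish g) = snd b"
  shows "path_image f \<inter> path_image g \<noteq> {}"
proof -
  obtain z where "z \<in> path_image (vec_of_pair \<circ> f)" "z \<in> path_image (vec_of_pair \<circ> g)"
  proof (rule fashoda[of "vec_of_pair \<circ> f" "vec_of_pair \<circ> g" "vec_of_pair a" "vec_of_pair b"])
    show "path (vec_of_pair \<circ> f)" "path (vec_of_pair \<circ> g)"
      using assms by (auto intro!: path_continuous_image continuous_on_vec_of_pair)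
    show "path_image (vec_of_pair \<circ> f) \<subseteq> cbox (vec_of_pair a) (vec_of_pair b)"
         "path_image (vec_of_pair \<circ> g) \<subseteq> cbox (vec_of_pair a) (vec_of_pair b)"
      using assms by (auto simp: path_image_compose vec_of_pair_in_cbox_iff)
  qed (use assms in \<open>auto simp: pathstart_compose pathfinish_compose\<close>)
  then show ?thesis
    by (auto simp: path_image_compose dest: injD[OF inj_vec_of_pair])
qed

lemma first_hitting_time:
  fixes f :: "real \<Rightarrow> real"
  assumes cont: "continuous_on {a..b} f" and "a \<le> b" "y < f a" "f b \<le> y"
  obtains t where "t \<in> {a..b}" "f t = y" "\<And>s. s \<in> {a..<t} \<Longrightarrow> y < f s"
proof -
  define T where "T = {a..b} \<inter> f -` {..y}"
  have "closed T"
    unfolding T_def by (rule continuous_closed_preimage[OF cont]) auto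
  moreover have "b \<in> T" and bdd: "bdd_below T"
    using assms by (auto simp: T_def bdd_below_def)
  ultimately have tT: "Inf T \<in> T"
    using closed_contains_Inf by blast
  have above: "y < f s" if "s \<in> {a..<Inf T}" for s
  proof (rule ccontr)
    assume "\<not> y < f s"
    then have "s \<in> T" using that tT by (auto simp: T_def)
    then show False using cInf_lower[OF _ bdd, of s] that by auto
  qed
  have "f (Inf T) = y"
  proof (rule ccontr)
    assume "f (Inf T) \<noteq> y"
    then have "f (Inf T) \<le> y" "a \<le> Inf T" using tT by (auto simp: T_def)
    then obtain s where "a \<le> s" "s \<le> Inf T" "f s = y"
      using IVT2'[of f "Inf T" y a] assms(3) continuous_on_subset[OF cont] tT
      by (auto simp: T_def)
    with above \<open>f (Inf T) \<noteq> y\<close> show False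
      by (metis atLeastLessThan_iff less_irrefl order_le_less)
  qed
  with tT above show ?thesis by (intro that[of "Inf T"]) (auto simp: T_def)
qed

lemma path_crosses_strip:
  fixes g :: "real \<Rightarrow> real \<times> real"
  assumes "path g" "h < snd (pathstart g)" "snd (pathfinish g) < 0" "0 < h"
  obtains \<gamma> where "path \<gamma>" "path_image \<gamma> \<subseteq> path_image g"
    "path_image \<gamma> \<subseteq> {q. 0 \<le> snd q \<and> snd q \<le> h}" "snd (pathstart \<gamma>) = h" "snd (pathfinish \<gamma>) = 0"
proof -
  define f where "f = snd \<circ> g"
  have cont: "continuous_on {0..1} f"
    using assms(1) unfolding f_def path_def by (intro continuous_on_compose continuous_on_snd) auto
  obtain t1 where t1: "t1 \<in> {0..1}" "f t1 = 0" and pos: "\<And>s. s \<in> {0..<t1} \<Longrightarrow> 0 < f s"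
    using first_hitting_time[OF cont, of 0] assms by (auto simp: f_def pathstart_def pathfinish_def)
  \<comment> \<open>the last visit of height h before t1 is a first hitting time for the time-reversed path\<close>
  have "continuous_on {0..t1} (\<lambda>u. - f (t1 - u))"
    using t1(1) by (intro continuous_intros continuous_on_compose2[OF cont]) auto
  then obtain u where u: "u \<in> {0..t1}" "- f (t1 - u) = - h"
      and below: "\<And>s. s \<in> {0..<u} \<Longrightarrow> - h < - f (t1 - s)"
    using first_hitting_time[of 0 t1 "\<lambda>u. - f (t1 - u)" "- h"] t1 assms(2,4)
    by (auto simp: f_def pathstart_def)
  define t0 where "t0 = t1 - u"
  have t0: "0 \<le> t0" "t0 \<le> t1" using u by (auto simp: t0_def)
  have "0 \<le> f s \<and> f s \<le> h" if "s \<in> {t0..t1}" for s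
  proof
    show "0 \<le> f s"
      using pos[of s] t0 that t1(2) by (cases "s = t1") auto
    show "f s \<le> h"
      using below[of "t1 - s"] u(2) that by (cases "s = t0") (auto simp: t0_def)
  qed
  moreover have "path_image (subpath t0 t1 g) = g ` {t0..t1}"
    using t0 by (simp add: path_image_subpath)
  moreover have "g ` {t0..t1} \<subseteq> path_image g"
    using t0 t1(1) by (auto simp: path_image_def)
  ultimately show ?thesis
    using assms(1) t0 t1 u(2)
    by (intro that[of "subpath t0 t1 g"]) (auto simp: f_def t0_def intro!: path_subpath)
qed

section \<open>Chains of overlapping discs\<close>

text \<open>The discs of radius \<open>r\<close> around consecutive points of \<open>ps\<close> overlap, and the first one reaches
  the half-plane \<open>fst \<le> x\<close>.\<close>
definition ball_chain :: "(real \<times> real) set \<Rightarrow> real \<Rightarrow> real \<Rightarrow> (real \<times> real) list \<Rightarrow> bool" where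
  "ball_chain P x r ps \<longleftrightarrow> ps \<noteq> [] \<and> distinct ps \<and> set ps \<subseteq> P \<and> fst (hd ps) \<le> x + r \<and>
     (\<forall>j. Suc j < length ps \<longrightarrow> dist (ps ! j) (ps ! Suc j) \<le> 2 * r)"

lemma ball_chain_singleton: "p \<in> P \<Longrightarrow> fst p \<le> x + r \<Longrightarrow> ball_chain P x r [p]"
  by (simp add: ball_chain_def)

lemma ball_chain_take:
  "ball_chain P x r ps \<Longrightarrow> i < length ps \<Longrightarrow> ball_chain P x r (take (Suc i) ps)"
  unfolding ball_chain_def by (auto dest: in_set_takeD)

lemma ball_chain_snoc:
  assumes "ball_chain P x r ps" "p \<in> P" "p \<notin> set ps" "dist (last ps) p \<le> 2 * r"
  shows "ball_chain P x r (ps @ [p])"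
proof -
  have "dist ((ps @ [p]) ! j) ((ps @ [p]) ! Suc j) \<le> 2 * r" if j: "Suc j < length (ps @ [p])" for j
  proof (cases "Suc j = length ps")
    case True
    then have "ps ! j = last ps"
      by (metis diff_Suc_1 last_conv_nth list.size(3) nat.distinct(1))
    with True assms(4) show ?thesis
      by (simp add: nth_append)
  next
    case False
    with j assms(1) show ?thesis
      by (simp add: ball_chain_def nth_append)
  qed
  with assms(1-3) show ?thesis
    unfolding ball_chain_def by auto
qed

lemma ball_chain_extend:
  assumes "ball_chain P x r ps" "p \<in> P" "dist (last ps) p \<le> 2 * r"
  obtains qs where "ball_chain P x r qs" "last qs = p"
proof (cases "p \<in> set ps")
  case True
  then obtain i where "i < length ps" "ps ! i = p"
    by (auto simp: in_set_conv_nth)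
  moreover have "last (take (Suc i) ps) = ps ! i"
    using \<open>i < length ps\<close> by (simp add: take_Suc_conv_app_nth)
  ultimately show ?thesis
    using assms(1) by (intro that[of "take (Suc i) ps"]) (auto simp: ball_chain_take)
next
  case False
  with assms show ?thesis
    by (intro that[of "ps @ [p]"]) (auto intro: ball_chain_snoc)
qed

lemma fst_ball_chain_last:
  assumes "ball_chain P x r ps"
  shows "fst (last ps) \<le> x + r + 2 * r * (real (length ps) - 1)"
proof -
  have "fst (ps ! j) \<le> fst (ps ! 0) + 2 * r * real j" if "j < length ps" for j
    using that
  proof (induction j)
    case (Suc j)
    then have "dist (ps ! j) (ps ! Suc j) \<le> 2 * r"
      using assms by (simp add: ball_chain_def)
    with Suc dist_fst_le[of "ps ! j" "ps ! Suc j"] show ?case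
      by (simp add: dist_real_def algebra_simps)
  qed simp
  from this[of "length ps - 1"] assms show ?thesis
    by (auto simp: ball_chain_def last_conv_nth hd_conv_nth Suc_le_eq)
qed

text \<open>If no chain got that far, the centres reached by chains would form a set \<open>J\<close>, and the discs around \<open>J\<close> with the left
  half-plane and the other discs with the right half-plane would be disjoint closed sets covering
  \<open>C\<close>.\<close>
lemma ball_chain_crossing:
  fixes P C :: "(real \<times> real) set"
  assumes "finite P" "x1 < x2" "connected C"
    and cover: "C \<subseteq> {q. fst q \<le> x1} \<union> {q. x2 \<le> fst q} \<union> (\<Union>p\<in>P. cball p r)"
    and "C \<inter> {q. fst q \<le> x1} \<noteq> {}" "C \<inter> {q. x2 \<le> fst q} \<noteq> {}"
  obtains ps where "ball_chain P x1 r ps" "x2 - r \<le> fst (last ps)"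
proof -
  have "\<exists>ps. ball_chain P x1 r ps \<and> x2 - r \<le> fst (last ps)"
  proof (rule ccontr)
    assume short: "\<not> ?thesis"
    define J where "J = {p \<in> P. \<exists>ps. ball_chain P x1 r ps \<and> last ps = p}"
    define T1 where "T1 = {q. fst q \<le> x1} \<union> (\<Union>p\<in>J. cball p r)"
    define T2 where "T2 = {q. x2 \<le> fst q} \<union> (\<Union>p\<in>P - J. cball p r)"
    have "closed T1" "closed T2"
      unfolding T1_def T2_def J_def using assms(1)
      by (intro closed_Un closed_UN ballI closed_cball finite_subset[OF _ assms(1)];
          simp add: closed_Collect_le continuous_on_fst)+
    have left_reached: "p \<in> J" if "p \<in> P" "q \<in> cball p r" "fst q \<le> x1" for p q
      using ball_chain_singleton[of p P x1 r] that dist_fst_le[of p q]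
      by (force simp: J_def dist_real_def)
    have not_right: "fst q < x2" if "p \<in> J" "q \<in> cball p r" for p q
      using short that dist_fst_le[of p q] by (force simp: J_def dist_real_def)
    have extend: "p \<in> J" if "p' \<in> J" "p \<in> P" "q \<in> cball p' r" "q \<in> cball p r" for p p' q
    proof -
      obtain ps where "ball_chain P x1 r ps" "last ps = p'"
        using \<open>p' \<in> J\<close> by (auto simp: J_def)
      moreover have "dist p' p \<le> 2 * r"
        using that dist_triangle[of p' p q] by (simp add: dist_commute)
      ultimately show ?thesis
        using \<open>p \<in> P\<close> by (metis (mono_tags, lifting) J_def ball_chain_extend mem_Collect_eq)
    qed
    have "q \<notin> T2" if "q \<in> T1" for q
    proof
      assume "q \<in> T2"
      from \<open>q \<in> T1\<close> consider "fst q \<le> x1" | p' where "p' \<in> J" "q \<in> cball p' r"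
        unfolding T1_def by blast
      then show False
      proof cases
        case 1
        with \<open>q \<in> T2\<close> assms(2) left_reached[of _ q] show False
          unfolding T2_def by auto
      next
        case 2
        with \<open>q \<in> T2\<close> not_right extend show False
          unfolding T2_def by fastforce
      qed
    qed
    then have "T1 \<inter> T2 = {}" by blast
    moreover have "C \<subseteq> T1 \<union> T2" "C \<inter> T1 \<noteq> {}" "C \<inter> T2 \<noteq> {}"
      using assms(4-6) unfolding T1_def T2_def by blast+
    ultimately show False
      using \<open>connected C\<close> \<open>closed T1\<close> \<open>closed T2\<close> unfolding connected_closed by blast
  qed
  with that show ?thesis by blast
qed

lemma connected_component_detour:
  fixes D :: "(real \<times> real) set"
  assumes "\<And>z. z \<in> D \<Longrightarrow> fst z \<noteq> e"
    and "\<And>z. z \<in> D \<Longrightarrow> fst z \<in> closed_segment m e \<Longrightarrow> snd z \<noteq> y1 \<and> snd z \<noteq> y2"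
  shows "connected_component (- D) (m, y1) (m, y2)"
proof -
  define T where "T = closed_segment (m, y1) (e, y1) \<union> closed_segment (e, y1) (e, y2) \<union>
                      closed_segment (e, y2) (m, y2)"
  have "connected T"
    unfolding T_def by (intro connected_Un connected_segment) auto
  moreover have "z \<notin> D" if "z \<in> T" for z
  proof
    assume "z \<in> D"
    obtain x y where z: "z = (x, y)" by fastforce
    from \<open>z \<in> T\<close> consider "y = y1" "x \<in> closed_segment m e" | "x = e"
      | "y = y2" "x \<in> closed_segment m e"
      unfolding T_def z by (auto dest!: closed_segment_PairD simp: closed_segment_commute[of e m])
    then show False
      using assms \<open>z \<in> D\<close> unfolding z by cases fastforce+
  qed
  moreover have "(m, y1) \<in> T" "(m, y2) \<in> T"
    by (auto simp: T_def)
  ultimately show ?thesis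
    unfolding connected_component_def by blast
qed

text \<open>Take two points above and below all discs. Either they are joined in the complement of
  \<open>S\<close> = left half-plane \<open>\<union>\<close> right half-plane \<open>\<union>\<close> discs, and the joining path contains the clear path,
  or some component of \<open>S\<close> separates them; that component meets both half-planes.\<close>
lemma clear_path_or_ball_chain:
  fixes P :: "(real \<times> real) set"
  assumes "finite P" "x1 < x2" "0 < r" "0 < h"
    and P_strip: "\<forall>p\<in>P. 0 \<le> snd p \<and> snd p \<le> h"
  obtains (path) \<gamma> where "path \<gamma>"
      "path_image \<gamma> \<subseteq> {q. x1 < fst q \<and> fst q < x2 \<and> 0 \<le> snd q \<and> snd q \<le> h}"
      "snd (pathstart \<gamma>) = h" "snd (pathfinish \<gamma>) = 0"
      "\<forall>p\<in>P. \<forall>z\<in>path_image \<gamma>. r < dist p z"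
  | (chain) ps where "ball_chain P x1 r ps" "x2 - r \<le> fst (last ps)"
proof -
  define Left :: "(real \<times> real) set" where "Left = {q. fst q \<le> x1}"
  define Right :: "(real \<times> real) set" where "Right = {q. x2 \<le> fst q}"
  define S where "S = Left \<union> Right \<union> (\<Union>p\<in>P. cball p r)"
  define m where "m = (x1 + x2) / 2"
  define ya where "ya = h + r + 1"
  define yb where "yb = - r - 1"
  have "closed S"
    unfolding S_def Left_def Right_def using assms(1)
    by (intro closed_Un closed_UN ballI closed_cball; simp add: closed_Collect_le continuous_on_fst)
  have off_discs: "z \<in> Left \<union> Right" if "z \<in> S" "snd z = ya \<or> snd z = yb" for z
  proof (rule ccontr)
    assume "z \<notin> Left \<union> Right"
    then obtain p where "p \<in> P" "dist p z \<le> r"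
      using \<open>z \<in> S\<close> by (auto simp: S_def)
    then show False
      using P_strip \<open>p \<in> P\<close> dist_snd_le[of p z] that(2) assms(3)
      by (auto simp: ya_def yb_def dist_real_def)
  qed
  show ?thesis
  proof (cases "connected_component (- S) (m, ya) (m, yb)")
    case True
    then have "path_component (- S) (m, ya) (m, yb)"
      using \<open>closed S\<close> open_path_connected_component[of "- S"] by (simp add: open_Compl)
    then obtain g where g: "path g" "path_image g \<subseteq> - S"
        "pathstart g = (m, ya)" "pathfinish g = (m, yb)"
      unfolding path_component_def by blast
    then obtain \<gamma> where \<gamma>: "path \<gamma>" "path_image \<gamma> \<subseteq> path_image g"
        "path_image \<gamma> \<subseteq> {q. 0 \<le> snd q \<and> snd q \<le> h}" "snd (pathstart \<gamma>) = h" "snd (pathfinish \<gamma>) = 0"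
      using path_crosses_strip[of g h] assms(3,4) by (auto simp: ya_def yb_def)
    with g(2) have "path_image \<gamma> \<subseteq> - S" by blast
    with \<gamma> show ?thesis
      by (intro path[of \<gamma>]) (auto simp: S_def Left_def Right_def subset_iff not_le)
  next
    case False
    then obtain C where C: "C \<in> components S" "\<not> connected_component (- C) (m, ya) (m, yb)"
      using separation_by_component_closed_pointwise[OF \<open>closed S\<close>] by blast
    then have "connected C" "C \<subseteq> S"
      by (auto simp: in_components_connected in_components_subset)
    \<comment> \<open>otherwise a detour around the far side of the slab would join the two points\<close>
    have "C \<inter> Right \<noteq> {}"
    proof
      assume "C \<inter> Right = {}"
      then have "connected_component (- C) (m, ya) (m, yb)"
        using \<open>C \<subseteq> S\<close> off_discs assms(2)
        by (intro connected_component_detour[of C "x2 + 1"])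
           (fastforce simp: Left_def Right_def m_def closed_segment_eq_real_ivl)+
      with C(2) show False ..
    qed
    moreover have "C \<inter> Left \<noteq> {}"
    proof
      assume "C \<inter> Left = {}"
      then have "connected_component (- C) (m, ya) (m, yb)"
        using \<open>C \<subseteq> S\<close> off_discs assms(2)
        by (intro connected_component_detour[of C "x1 - 1"])
           (fastforce simp: Left_def Right_def m_def closed_segment_eq_real_ivl)+
      with C(2) show False ..
    qed
    ultimately obtain ps where "ball_chain P x1 r ps" "x2 - r \<le> fst (last ps)"
      using ball_chain_crossing[OF assms(1,2) \<open>connected C\<close>] \<open>C \<subseteq> S\<close>
      unfolding S_def Left_def Right_def by blast
    then show ?thesis by (rule chain)
  qed
qed

definition grid_cell :: "real \<Rightarrow> int \<times> int \<Rightarrow> (real \<times> real) set" where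
  "grid_cell s k = {of_int (fst k) * s ..< (of_int (fst k) + 1) * s} \<times>
                   {of_int (snd k) * s ..< (of_int (snd k) + 1) * s}"

definition grid_index :: "real \<Rightarrow> real \<times> real \<Rightarrow> int \<times> int" where
  "grid_index s p = (\<lfloor>fst p / s\<rfloor>, \<lfloor>snd p / s\<rfloor>)"

lemma mem_grid_cell_grid_index: "0 < s \<Longrightarrow> p \<in> grid_cell s (grid_index s p)"
  by (auto simp: grid_cell_def grid_index_def mem_Times_iff floor_divide_lower floor_divide_upper)

lemma grid_cell_sets: "grid_cell s k \<in> sets borel"
  unfolding grid_cell_def borel_prod[symmetric] by (intro pair_measureI) auto

lemma abs_floor_divide_diff_le:
  fixes a b s :: real
  assumes "0 < s" "\<bar>a - b\<bar> \<le> s"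
  shows "\<bar>\<lfloor>a / s\<rfloor> - \<lfloor>b / s\<rfloor>\<bar> \<le> 1"
proof -
  have "a / s \<le> b / s + 1" "b / s \<le> a / s + 1"
    using assms by (auto simp: field_simps)
  then have "\<lfloor>a / s\<rfloor> \<le> \<lfloor>b / s\<rfloor> + 1" "\<lfloor>b / s\<rfloor> \<le> \<lfloor>a / s\<rfloor> + 1"
    using floor_mono[of "a / s" "b / s + 1"] floor_mono[of "b / s" "a / s + 1"] by simp_all
  then show ?thesis by linarith
qed

lemma grid_index_close:
  assumes "0 < s" "dist p q \<le> s"
  shows "fst (grid_index s q) - fst (grid_index s p) \<in> {-1..1}"
    and "snd (grid_index s q) - snd (grid_index s p) \<in> {-1..1}"
proof -
  have "\<bar>fst q - fst p\<bar> \<le> s" "\<bar>snd q - snd p\<bar> \<le> s"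
    using dist_fst_le[of q p] dist_snd_le[of q p] assms(2)
    by (simp_all add: dist_real_def dist_commute)
  then show "fst (grid_index s q) - fst (grid_index s p) \<in> {-1..1}"
    and "snd (grid_index s q) - snd (grid_index s p) \<in> {-1..1}"
    using abs_floor_divide_diff_le[OF assms(1)] unfolding grid_index_def atLeastAtMost_iff
    by (fastforce simp: abs_le_iff)+
qed

lemma measure_uniform_grid_cell:
  assumes "S \<in> sets lborel" "0 < emeasure lborel S" "emeasure lborel S < \<infinity>"
  shows "measure (uniform_measure lborel S) (grid_cell s k) \<le> s\<^sup>2 / measure lborel S"
proof -
  define u v where "u = real_of_int (fst k)" and "v = real_of_int (snd k)"
  have sub: "S \<inter> grid_cell s k \<subseteq> cbox (u * s, v * s) ((u + 1) * s, (v + 1) * s)"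
    by (auto simp: grid_cell_def u_def v_def)
  have "measure lborel (S \<inter> grid_cell s k)
      \<le> measure lborel (cbox (u * s, v * s) ((u + 1) * s, (v + 1) * s))"
    by (rule measure_mono_fmeasurable[OF sub _ fmeasurable_cbox])
       (use assms(1) grid_cell_sets[of s k] in simp)
  also have "\<dots> \<le> s\<^sup>2"
    by (simp add: measure_lborel_cbox_eq Basis_prod_def algebra_simps power2_eq_square)
  finally have "measure lborel (S \<inter> grid_cell s k) \<le> s\<^sup>2" .
  moreover have "measure (uniform_measure lborel S) (grid_cell s k)
      = measure lborel (S \<inter> grid_cell s k) / measure lborel S"
    using assms grid_cell_sets[of s k] by (intro measure_uniform_measure) auto
  ultimately show ?thesis
    by (simp add: divide_right_mono)
qed

lemma measure_PiM_components_in: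
  assumes "prob_space M" "finite J" "J \<subseteq> I" "\<And>i. i \<in> J \<Longrightarrow> X i \<in> sets M"
  shows "measure (PiM I (\<lambda>_. M)) {\<omega> \<in> space (PiM I (\<lambda>_. M)). \<forall>i\<in>J. \<omega> i \<in> X i}
       = (\<Prod>i\<in>J. measure M (X i))"
proof -
  have "{\<omega> \<in> space (PiM I (\<lambda>_. M)). \<forall>i\<in>J. \<omega> i \<in> X i} = prod_emb I (\<lambda>_. M) J (PiE J X)"
    using assms(3) by (auto simp: prod_emb_iff PiE_iff space_PiM)
  moreover have "emeasure (PiM I (\<lambda>_. M)) (prod_emb I (\<lambda>_. M) J (PiE J X))
      = (\<Prod>i\<in>J. ennreal (measure M (X i)))"
    using assms emeasure_PiM_emb[of I "\<lambda>_. M" J X]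
    by (simp add: finite_measure.emeasure_eq_measure prob_space.finite_measure)
  ultimately show ?thesis
    by (simp add: measure_def prod_ennreal prod_nonneg)
qed

lemma PiM_component_in_sets:
  assumes "i \<in> I" "X \<in> sets M"
  shows "{\<omega> \<in> space (PiM I (\<lambda>_. M)). \<omega> i \<in> X} \<in> sets (PiM I (\<lambda>_. M))"
  using measurable_sets[OF measurable_component_singleton[OF assms(1)] assms(2)]
  by (simp add: vimage_def Int_def conj_commute)

section \<open>Chains of nodes in adjacent grid cells\<close>

text \<open>Nodes at distance at most \<open>s\<close> lie in equal or adjacent cells of side \<open>s\<close>, so a chain of
  \<open>K + 1\<close> nodes is recorded by the injection choosing the nodes, its start cell and \<open>K\<close> king moves.\<close>
definition cell_walk :: "int \<times> int \<Rightarrow> (nat \<Rightarrow> int \<times> int) \<Rightarrow> nat \<Rightarrow> int \<times> int" where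
  "cell_walk k0 mv j = (fst k0 + (\<Sum>i<j. fst (mv i)), snd k0 + (\<Sum>i<j. snd (mv i)))"

definition unit_steps :: "nat \<Rightarrow> (nat \<Rightarrow> int \<times> int) set" where
  "unit_steps K = {..<K} \<rightarrow>\<^sub>E ({-1..1} \<times> {-1..1})"

definition injections :: "nat \<Rightarrow> nat \<Rightarrow> (nat \<Rightarrow> nat) set" where
  "injections K N = {f \<in> {..K} \<rightarrow>\<^sub>E {..<N}. inj_on f {..K}}"

definition walk_event :: "(real \<times> real) measure \<Rightarrow> nat \<Rightarrow> nat \<Rightarrow> real \<Rightarrow> (nat \<Rightarrow> nat) \<Rightarrow>
    int \<times> int \<Rightarrow> (nat \<Rightarrow> int \<times> int) \<Rightarrow> (nat \<Rightarrow> real \<times> real) set" where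
  "walk_event M N K s f k0 mv =
     {\<omega> \<in> space (PiM {..<N} (\<lambda>_. M)). \<forall>j\<in>{..K}. \<omega> (f j) \<in> grid_cell s (cell_walk k0 mv j)}"

definition cell_chain_event :: "(real \<times> real) measure \<Rightarrow> nat \<Rightarrow> nat \<Rightarrow> real \<Rightarrow> (int \<times> int) set \<Rightarrow>
    (nat \<Rightarrow> real \<times> real) set" where
  "cell_chain_event M N K s Z =
     (\<Union>(f, k0, mv) \<in> injections K N \<times> Z \<times> unit_steps K. walk_event M N K s f k0 mv)"

lemma finite_injections: "finite (injections K N)"
  unfolding injections_def by (rule finite_subset[OF _ finite_PiE[of "{..K}" "\<lambda>_. {..<N}"]]) auto

lemma card_injections_le: "card (injections K N) \<le> N ^ Suc K"
proof -
  have "card (injections K N) \<le> card ({..K} \<rightarrow>\<^sub>E {..<N})"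
    unfolding injections_def by (rule card_mono) (auto intro: finite_PiE)
  then show ?thesis by (simp add: card_PiE)
qed

lemma finite_unit_steps: "finite (unit_steps K)"
  by (simp add: unit_steps_def finite_PiE)

lemma card_unit_steps: "card (unit_steps K) = 9 ^ K"
  by (simp add: unit_steps_def card_PiE)

lemma walk_event_sets:
  assumes "f \<in> injections K N" "sets M = sets borel"
  shows "walk_event M N K s f k0 mv \<in> sets (PiM {..<N} (\<lambda>_. M))"
  unfolding walk_event_def
proof (rule sets.sets_Collect_finite_All)
  fix j assume "j \<in> {..K}"
  then show "{\<omega> \<in> space (PiM {..<N} (\<lambda>_. M)). \<omega> (f j) \<in> grid_cell s (cell_walk k0 mv j)}
      \<in> sets (PiM {..<N} (\<lambda>_. M))"
    using assms by (intro PiM_component_in_sets) (auto simp: injections_def grid_cell_sets)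
qed simp

lemma cell_chain_event_sets:
  assumes "finite Z" "sets M = sets borel"
  shows "cell_chain_event M N K s Z \<in> sets (PiM {..<N} (\<lambda>_. M))"
  unfolding cell_chain_event_def using assms finite_injections finite_unit_steps
  by (intro sets.finite_UN) (auto intro: walk_event_sets)

lemma measure_walk_event:
  assumes M: "prob_space M" "sets M = sets borel" and f: "f \<in> injections K N"
    and q: "\<And>k. measure M (grid_cell s k) \<le> q"
  shows "measure (PiM {..<N} (\<lambda>_. M)) (walk_event M N K s f k0 mv) \<le> q ^ Suc K"
proof -
  define cell where "cell i = grid_cell s (cell_walk k0 mv (the_inv_into {..K} f i))" for i
  have inj: "inj_on f {..K}" and range: "f ` {..K} \<subseteq> {..<N}"
    using f by (auto simp: injections_def)
  have eq: "walk_event M N K s f k0 mv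
      = {\<omega> \<in> space (PiM {..<N} (\<lambda>_. M)). \<forall>i\<in>f ` {..K}. \<omega> i \<in> cell i}"
    using inj by (auto simp: walk_event_def cell_def the_inv_into_f_f)
  have "measure (PiM {..<N} (\<lambda>_. M)) (walk_event M N K s f k0 mv)
      = (\<Prod>i\<in>f ` {..K}. measure M (cell i))"
    unfolding eq by (rule measure_PiM_components_in[OF M(1) _ range]) (auto simp: cell_def M(2) grid_cell_sets)
  also have "\<dots> = (\<Prod>j\<in>{..K}. measure M (grid_cell s (cell_walk k0 mv j)))"
    using inj by (simp add: prod.reindex cell_def the_inv_into_f_f)
  also have "\<dots> \<le> (\<Prod>j\<in>{..K}. q)"
    by (intro prod_mono conjI measure_nonneg q)
  finally show ?thesis by simp
qed

lemma measure_cell_chain_event: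
  assumes M: "prob_space M" "sets M = sets borel" and "finite Z"
    and q: "\<And>k. measure M (grid_cell s k) \<le> q"
  shows "measure (PiM {..<N} (\<lambda>_. M)) (cell_chain_event M N K s Z)
         \<le> real N ^ Suc K * real (card Z) * 9 ^ K * q ^ Suc K"
proof -
  let ?I = "injections K N \<times> Z \<times> unit_steps K"
  define W where "W = (\<lambda>(f, k0, mv). walk_event M N K s f k0 mv)"
  have "0 \<le> q" using q[of 0] measure_nonneg order_trans by blast
  have "measure (PiM {..<N} (\<lambda>_. M)) (cell_chain_event M N K s Z)
      \<le> (\<Sum>i \<in> ?I. measure (PiM {..<N} (\<lambda>_. M)) (W i))"
    unfolding cell_chain_event_def W_def
    by (rule measure_UNION_le)
       (use assms(3) finite_injections finite_unit_steps in \<open>auto intro: walk_event_sets[OF _ M(2)]\<close>)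
  also have "\<dots> \<le> (\<Sum>_ \<in> ?I. q ^ Suc K)"
    by (intro sum_mono) (auto simp: W_def simp del: power_Suc intro!: measure_walk_event[OF M _ q])
  also have "\<dots> = real (card (injections K N)) * real (card Z) * 9 ^ K * q ^ Suc K"
    by (simp add: card_cartesian_product card_unit_steps)
  also have "\<dots> \<le> real N ^ Suc K * real (card Z) * 9 ^ K * q ^ Suc K"
    using card_injections_le[of K N] \<open>0 \<le> q\<close>
    by (intro mult_right_mono) (simp_all only: of_nat_le_iff of_nat_power[symmetric] zero_le_power)
  finally show ?thesis .
qed

lemma mem_cell_chain_event:
  assumes s: "0 < s" and \<omega>: "\<omega> \<in> space (PiM {..<N} (\<lambda>_. M))" and f: "f \<in> injections K N"
    and start: "grid_index s (\<omega> (f 0)) \<in> Z"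
    and close: "\<And>j. j < K \<Longrightarrow> dist (\<omega> (f j)) (\<omega> (f (Suc j))) \<le> s"
  shows "\<omega> \<in> cell_chain_event M N K s Z"
proof -
  define \<kappa> where "\<kappa> j = grid_index s (\<omega> (f j))" for j
  define mv where "mv = (\<lambda>i\<in>{..<K}. (fst (\<kappa> (Suc i)) - fst (\<kappa> i), snd (\<kappa> (Suc i)) - snd (\<kappa> i)))"
  have "mv \<in> unit_steps K"
    using grid_index_close[OF s close] by (auto simp: unit_steps_def mv_def \<kappa>_def)
  moreover have "cell_walk (\<kappa> 0) mv j = \<kappa> j" if "j \<le> K" for j
  proof -
    have "(\<Sum>i<j. fst (mv i)) = (\<Sum>i<j. fst (\<kappa> (Suc i)) - fst (\<kappa> i))"
         "(\<Sum>i<j. snd (mv i)) = (\<Sum>i<j. snd (\<kappa> (Suc i)) - snd (\<kappa> i))"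
      using that by (auto intro!: sum.cong simp: mv_def)
    then show ?thesis
      using sum_lessThan_telescope[of "\<lambda>i. fst (\<kappa> i)" j] sum_lessThan_telescope[of "\<lambda>i. snd (\<kappa> i)" j]
      by (simp add: cell_walk_def)
  qed
  then have "\<omega> \<in> walk_event M N K s f (\<kappa> 0) mv"
    using \<omega> mem_grid_cell_grid_index[OF s] by (auto simp: walk_event_def \<kappa>_def)
  ultimately show ?thesis
    using f start unfolding cell_chain_event_def \<kappa>_def by blast
qed

lemma mem_rect_iff: "p \<in> rect A \<longleftrightarrow> 0 \<le> fst p \<and> fst p \<le> 2 * sqrt A \<and> 0 \<le> snd p \<and> snd p \<le> sqrt A"
  by (cases p) (simp add: rect_def)

lemma rect_sets [measurable]: "rect A \<in> sets borel"
  by (simp add: rect_def)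

lemma emeasure_rect: "0 < A \<Longrightarrow> emeasure lborel (rect A) = ennreal (2 * A)"
  by (simp add: rect_def emeasure_lborel_cbox_eq Basis_prod_def)

lemma prob_space_uniform_rect: "0 < A \<Longrightarrow> prob_space (uniform_measure lborel (rect A))"
  by (rule prob_space_uniform_measure) (auto simp: emeasure_rect)

lemma measure_uniform_rect_grid_cell:
  "0 < A \<Longrightarrow> measure (uniform_measure lborel (rect A)) (grid_cell s k) \<le> s\<^sup>2 / (2 * A)"
  using measure_uniform_grid_cell[of "rect A" s k] by (simp add: emeasure_rect measure_def)

lemma measure_uniform_rect_rect:
  assumes "0 < A" shows "measure (uniform_measure lborel (rect A)) (rect A) = 1"
proof -
  have "measure lborel (rect A) = 2 * A"
    using assms by (simp add: measure_def emeasure_rect)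
  then show ?thesis
    using assms by (subst measure_uniform_measure) (simp_all add: emeasure_rect)
qed

lemma nodes_in_rect_sets:
  "{\<omega> \<in> space (node_space A n). \<forall>i\<in>{..<2 * n}. \<omega> i \<in> rect A} \<in> sets (node_space A n)"
  unfolding node_space_def
  by (intro sets.sets_Collect_finite_All PiM_component_in_sets) auto

lemma measure_nodes_in_rect:
  assumes "0 < A"
  shows "measure (node_space A n) {\<omega> \<in> space (node_space A n). \<forall>i\<in>{..<2 * n}. \<omega> i \<in> rect A} = 1"
  unfolding node_space_def
  using measure_PiM_components_in[OF prob_space_uniform_rect[OF assms], of "{..<2 * n}" "{..<2 * n}" "\<lambda>_. rect A"]
  by (simp add: measure_uniform_rect_rect[OF assms])

definition rect_cells :: "real \<Rightarrow> real \<Rightarrow> (int \<times> int) set" where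
  "rect_cells A s = {0..\<lfloor>2 * sqrt A / s\<rfloor>} \<times> {0..\<lfloor>sqrt A / s\<rfloor>}"

lemma grid_index_in_rect_cells:
  assumes "0 < s" "p \<in> rect A"
  shows "grid_index s p \<in> rect_cells A s"
  using assms
  by (auto simp: grid_index_def rect_cells_def mem_rect_iff intro!: floor_mono divide_right_mono)

lemma card_rect_cells_le:
  assumes "0 < s" "s \<le> sqrt A"
  shows "real (card (rect_cells A s)) \<le> 6 * A / s\<^sup>2"
proof -
  define t where "t = sqrt A / s"
  have "1 \<le> t" using assms by (simp add: t_def)
  have "0 < A" using assms by (metis less_le_trans real_sqrt_gt_0_iff)
  have "2 * sqrt A / s = 2 * t" by (simp add: t_def)
  then have "real (card (rect_cells A s)) = (of_int \<lfloor>2 * t\<rfloor> + 1) * (of_int \<lfloor>t\<rfloor> + 1)"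
    using \<open>1 \<le> t\<close> by (simp add: rect_cells_def t_def)
  also have "\<dots> \<le> (3 * t) * (2 * t)"
    using \<open>1 \<le> t\<close> by (intro mult_mono) linarith+
  also have "\<dots> = 6 * A / s\<^sup>2"
    using assms \<open>0 < A\<close> by (simp add: t_def power2_eq_square field_simps)
  finally show ?thesis .
qed

section \<open>Probability of a long chain\<close>

lemma less_one_if_less_inverse_7_sqrt_e:
  fixes c :: real
  assumes "c < 1 / (7 * sqrt (exp 1))"
  shows "c < 1"
proof -
  have "1 \<le> sqrt (exp 1 :: real)"
    by simp
  with assms show ?thesis
    by (smt (verit) divide_le_eq_1)
qed

text \<open>This is where the constant comes from: \<open>9 / (49 e) \<le> e\<^sup>-\<^sup>2\<close> because \<open>9 e \<le> 49\<close>.\<close>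
lemma nine_sq_le_exp_neg_two:
  fixes c :: real
  assumes "0 < c" "c < 1 / (7 * sqrt (exp 1))"
  shows "9 * c\<^sup>2 \<le> exp (-2)"
proof -
  have "c\<^sup>2 < (1 / (7 * sqrt (exp 1)))\<^sup>2"
    using assms by (intro power_strict_mono) auto
  also have "\<dots> = 1 / (49 * exp 1)"
    by (simp add: power_divide power_mult_distrib)
  finally have "9 * c\<^sup>2 \<le> 9 / (49 * exp 1)" by simp
  also have "\<dots> \<le> 1 / (exp 1 * exp 1)"
    using exp_le by (simp add: field_simps)
  also have "\<dots> = exp (-2)"
    by (simp add: exp_minus exp_add[symmetric] inverse_eq_divide)
  finally show ?thesis .
qed

lemma exp_neg_two_power_le:
  assumes "1 \<le> n"
  shows "exp (-2) ^ (nat \<lfloor>ln (real n)\<rfloor> - 1) \<le> exp 4 / (real n)\<^sup>2"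
proof -
  define K where "K = nat \<lfloor>ln (real n)\<rfloor> - 1"
  have "0 \<le> ln (real n)" using assms by simp
  then have "ln (real n) - 2 \<le> real K"
    unfolding K_def by linarith
  have "exp (-2) ^ K = exp (-2 * real K)"
    by (simp add: exp_of_nat_mult[symmetric] mult.commute)
  also have "\<dots> \<le> exp (-2 * (ln (real n) - 2))"
    using \<open>ln (real n) - 2 \<le> real K\<close> by simp
  also have "\<dots> = exp 4 / (exp (ln (real n)) * exp (ln (real n)))"
    by (simp add: exp_diff[symmetric] exp_add[symmetric] algebra_simps)
  also have "\<dots> = exp 4 / (real n)\<^sup>2"
    using assms by (simp add: power2_eq_square)
  finally show ?thesis by (simp add: K_def)
qed

lemma measure_node_cell_chain_event:
  fixes A c :: real and n :: nat
  defines "s \<equiv> c * sqrt (A / real n)" and "K \<equiv> nat \<lfloor>ln (real n)\<rfloor> - 1"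
  assumes A: "0 < A" and c: "0 < c" "c < 1 / (7 * sqrt (exp 1))" and n: "1 \<le> n"
  shows "measure (node_space A n)
           (cell_chain_event (uniform_measure lborel (rect A)) (2 * n) K s (rect_cells A s))
         \<le> 6 * exp 4 / real n"
proof -
  have "c < 1" by (rule less_one_if_less_inverse_7_sqrt_e[OF c(2)])
  have "0 < s"
    using A c n by (simp add: s_def)
  have "s\<^sup>2 = c\<^sup>2 * A / real n"
    using A by (simp add: s_def power_mult_distrib)
  have "A / real n \<le> A"
    using A n by (simp add: divide_le_eq)
  then have "s \<le> 1 * sqrt A"
    unfolding s_def using \<open>c < 1\<close> A c(1) by (intro mult_mono) auto
  then have s: "0 < s" "s \<le> sqrt A" "s\<^sup>2 = c\<^sup>2 * A / real n"
    using \<open>0 < s\<close> \<open>s\<^sup>2 = c\<^sup>2 * A / real n\<close> by simp_all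
  \<comment> \<open>the expected number of nodes in one grid cell is \<open>c\<^sup>2\<close>\<close>
  have mean: "real (2 * n) * (s\<^sup>2 / (2 * A)) = c\<^sup>2"
    using s(3) A n by (simp add: field_simps)
  have "measure (node_space A n)
           (cell_chain_event (uniform_measure lborel (rect A)) (2 * n) K s (rect_cells A s))
      \<le> real (2 * n) ^ Suc K * real (card (rect_cells A s)) * 9 ^ K * (s\<^sup>2 / (2 * A)) ^ Suc K"
    unfolding node_space_def
    by (rule measure_cell_chain_event[OF prob_space_uniform_rect[OF A]])
       (simp_all add: rect_cells_def measure_uniform_rect_grid_cell[OF A])
  also have "\<dots> = real (card (rect_cells A s)) * 9 ^ K * (real (2 * n) * (s\<^sup>2 / (2 * A))) ^ Suc K"
    by (simp only: power_mult_distrib mult_ac)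
  also have "\<dots> = real (card (rect_cells A s)) * c\<^sup>2 * (9 * c\<^sup>2) ^ K"
    unfolding mean by (simp add: power_mult_distrib)
  also have "\<dots> \<le> (6 * real n / c\<^sup>2) * c\<^sup>2 * (exp 4 / (real n)\<^sup>2)"
  proof (intro mult_mono)
    show "real (card (rect_cells A s)) \<le> 6 * real n / c\<^sup>2"
      using card_rect_cells_le[OF s(1,2)] s(3) A c by (simp add: field_simps)
    show "(9 * c\<^sup>2) ^ K \<le> exp 4 / (real n)\<^sup>2"
      using power_mono[OF nine_sq_le_exp_neg_two[OF c], of K] exp_neg_two_power_le[OF n]
      unfolding K_def by simp
  qed simp_all
  also have "\<dots> = 6 * exp 4 / real n"
    using c n by (simp add: field_simps power2_eq_square)
  finally show ?thesis .
qed

lemma slab_width_le: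
  assumes "0 < A" "0 \<le> c" "c \<le> 1" "1 \<le> n"
  shows "c * sqrt (A / real n) * ln (real n) \<le> 2 * sqrt A"
proof -
  have "ln (real n) \<le> 2 * sqrt (real n)"
    using ln_le_minus_one[of "sqrt (real n)"] ln_sqrt[of "real n"] assms(4) by simp
  then have "c * sqrt (A / real n) * ln (real n) \<le> 1 * sqrt (A / real n) * (2 * sqrt (real n))"
    using assms by (intro mult_mono) auto
  also have "\<dots> = 2 * sqrt A"
    using assms by (simp add: real_sqrt_divide)
  finally show ?thesis .
qed

lemma good_config_of_clear_path:
  fixes A c :: real and n :: nat and \<gamma> :: "real \<Rightarrow> real \<times> real" and \<omega> :: "nat \<Rightarrow> real \<times> real"
  defines "L \<equiv> c * sqrt (A / real n) * ln (real n)"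
  assumes "L \<le> 2 * sqrt A" and \<gamma>: "path \<gamma>"
    "path_image \<gamma> \<subseteq> {q. sqrt A - L / 2 < fst q \<and> fst q < sqrt A + L / 2 \<and> 0 \<le> snd q \<and> snd q \<le> sqrt A}"
    "snd (pathstart \<gamma>) = sqrt A" "snd (pathfinish \<gamma>) = 0"
    and clear: "\<And>i z. i < 2 * n \<Longrightarrow> z \<in> path_image \<gamma> \<Longrightarrow> c / 2 * sqrt (A / real n) < dist (\<omega> i) z"
  shows "good_config A c n \<omega>"
proof -
  have "path_image \<gamma> \<subseteq> rect A"
    using assms(2) \<gamma>(2) by (auto simp: mem_rect_iff)
  have "is_cut A \<gamma>"
    unfolding is_cut_def
  proof (intro conjI allI impI)
    fix g
    assume "path g \<and> path_image g \<subseteq> rect A \<and> fst (pathstart g) = 0 \<and> fst (pathfinish g) = 2 * sqrt A"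
    then show "path_image g \<inter> path_image \<gamma> \<noteq> {}"
      using fashoda_prod[of g "reversepath \<gamma>" "(0, 0)" "(2 * sqrt A, sqrt A)"]
        \<gamma> \<open>path_image \<gamma> \<subseteq> rect A\<close>
      by (auto simp: rect_def)
  qed (use \<gamma> \<open>path_image \<gamma> \<subseteq> rect A\<close> in auto)
  moreover have "path_image \<gamma> \<subseteq> mid_slab A L"
  proof
    fix q
    assume "q \<in> path_image \<gamma>"
    with \<gamma>(2) have "sqrt A - L / 2 < fst q" "fst q < sqrt A + L / 2"
      by auto
    then show "q \<in> mid_slab A L"
      unfolding mid_slab_def mem_Collect_eq abs_le_iff by linarith
  qed
  moreover have "c / 2 * sqrt (A / real n) \<le> infdist (\<omega> i) (path_image \<gamma>)" if "i < 2 * n" for i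
    unfolding infdist_notempty[OF path_image_nonempty]
    by (rule cINF_greatest) (use clear that in \<open>auto intro: less_imp_le\<close>)
  ultimately show ?thesis
    unfolding good_config_def L_def by blast
qed

lemma cell_chain_event_of_ball_chain:
  assumes s: "0 < s" and \<omega>: "\<omega> \<in> space (PiM {..<N} (\<lambda>_. M))"
    and inside: "\<And>i. i < N \<Longrightarrow> \<omega> i \<in> rect A"
    and chain: "ball_chain (\<omega> ` {..<N}) x (s / 2) ps" and K: "K < length ps"
  shows "\<omega> \<in> cell_chain_event M N K s (rect_cells A s)"
proof -
  define f where "f = (\<lambda>j\<in>{..K}. inv_into {..<N} \<omega> (ps ! j))"
  have node: "f j < N \<and> \<omega> (f j) = ps ! j" if "j \<le> K" for j
  proof -
    have "ps ! j \<in> \<omega> ` {..<N}"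
      using chain K that nth_mem[of j ps] by (auto simp: ball_chain_def)
    then show ?thesis
      using that inv_into_into[of "ps ! j" \<omega> "{..<N}"] f_inv_into_f[of "ps ! j" \<omega> "{..<N}"]
      by (simp add: f_def)
  qed
  have "inj_on f {..K}"
  proof (rule inj_onI)
    fix a b
    assume "a \<in> {..K}" "b \<in> {..K}" "f a = f b"
    with node have "ps ! a = ps ! b" by (metis atMost_iff)
    with chain K \<open>a \<in> {..K}\<close> \<open>b \<in> {..K}\<close> show "a = b"
      by (auto simp: ball_chain_def nth_eq_iff_index_eq)
  qed
  with node have "f \<in> injections K N"
    by (auto simp: injections_def f_def)
  then show ?thesis
  proof (rule mem_cell_chain_event[OF s \<omega>])
    have "\<omega> (f 0) \<in> rect A"
      using node[of 0] inside by blast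
    then show "grid_index s (\<omega> (f 0)) \<in> rect_cells A s"
      by (rule grid_index_in_rect_cells[OF s])
    show "dist (\<omega> (f j)) (\<omega> (f (Suc j))) \<le> s" if "j < K" for j
      using chain K that node[of j] node[of "Suc j"] by (auto simp: ball_chain_def)
  qed
qed

lemma good_config_unless_cell_chain:
  fixes A c :: real and n :: nat and \<omega> :: "nat \<Rightarrow> real \<times> real"
  defines "s \<equiv> c * sqrt (A / real n)" and "K \<equiv> nat \<lfloor>ln (real n)\<rfloor> - 1"
  assumes A: "0 < A" and c: "0 < c" "c < 1" and n: "2 \<le> n"
    and \<omega>: "\<omega> \<in> space (node_space A n)" and inside: "\<And>i. i < 2 * n \<Longrightarrow> \<omega> i \<in> rect A"
    and sparse: "\<omega> \<notin> cell_chain_event (uniform_measure lborel (rect A)) (2 * n) K s (rect_cells A s)"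
  shows "good_config A c n \<omega>"
proof -
  define L where "L = s * ln (real n)"
  have "0 < s" "0 < L"
    using A c n by (simp_all add: s_def L_def)
  have "L \<le> 2 * sqrt A"
    using slab_width_le[of A c n] A c n by (simp add: L_def s_def)
  have P: "finite (\<omega> ` {..<2 * n})" "\<forall>p\<in>\<omega> ` {..<2 * n}. 0 \<le> snd p \<and> snd p \<le> sqrt A"
    using inside by (auto simp: mem_rect_iff)
  have x: "sqrt A - L / 2 < sqrt A + L / 2" and r: "0 < s / 2" and h: "0 < sqrt A"
    using \<open>0 < s\<close> \<open>0 < L\<close> A by simp_all
  from clear_path_or_ball_chain[OF P(1) x r h P(2), case_names path chain] show ?thesis
  proof cases
    case (path \<gamma>)
    show ?thesis
      by (rule good_config_of_clear_path[where \<gamma> = \<gamma>])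
         (use path \<open>L \<le> 2 * sqrt A\<close> in \<open>auto simp: L_def s_def\<close>)
  next
    case (chain ps)
    \<comment> \<open>the discs, of diameter s, span the slab of width L, so there are at least L / s = ln n of them\<close>
    have "L \<le> s * real (length ps)"
      using fst_ball_chain_last[OF chain(1)] chain(2) by (simp add: algebra_simps)
    then have "ln (real n) \<le> real (length ps)"
      using \<open>0 < s\<close> by (simp add: L_def)
    then have "nat \<lfloor>ln (real n)\<rfloor> \<le> length ps"
      using floor_mono[of "ln (real n)" "real (length ps)"] by simp
    moreover have "ps \<noteq> []"
      using chain(1) by (simp add: ball_chain_def)
    ultimately have "K < length ps"
      unfolding K_def by (cases ps) auto
    then have "\<omega> \<in> cell_chain_event (uniform_measure lborel (rect A)) (2 * n) K s (rect_cells A s)"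
      using \<omega> inside chain(1) \<open>0 < s\<close>
      by (intro cell_chain_event_of_ball_chain) (simp_all add: node_space_def)
    with sparse show ?thesis ..
  qed
qed

definition sparse_event :: "real \<Rightarrow> real \<Rightarrow> nat \<Rightarrow> (nat \<Rightarrow> real \<times> real) set" where
  "sparse_event A c n =
     {\<omega> \<in> space (node_space A n). \<forall>i\<in>{..<2 * n}. \<omega> i \<in> rect A} -
     cell_chain_event (uniform_measure lborel (rect A)) (2 * n) (nat \<lfloor>ln (real n)\<rfloor> - 1)
       (c * sqrt (A / real n)) (rect_cells A (c * sqrt (A / real n)))"

lemma sparse_event_sets: "sparse_event A c n \<in> sets (node_space A n)"
  unfolding sparse_event_def using nodes_in_rect_sets
  by (auto simp: node_space_def rect_cells_def intro!: cell_chain_event_sets)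

lemma sparse_event_good:
  assumes "0 < A" "0 < c" "c < 1" "2 \<le> n"
  shows "sparse_event A c n \<subseteq> {\<omega> \<in> space (node_space A n). good_config A c n \<omega>}"
  using good_config_unless_cell_chain[OF assms] by (auto simp: sparse_event_def)

lemma measure_sparse_event:
  assumes A: "0 < A" and c: "0 < c" "c < 1 / (7 * sqrt (exp 1))" and n: "1 \<le> n"
  shows "1 - 6 * exp 4 / real n \<le> measure (node_space A n) (sparse_event A c n)"
proof -
  interpret prob_space "node_space A n"
    unfolding node_space_def by (intro prob_space_PiM prob_space_uniform_rect[OF A])
  define Inside where "Inside = {\<omega> \<in> space (node_space A n). \<forall>i\<in>{..<2 * n}. \<omega> i \<in> rect A}"
  define Chain where "Chain = cell_chain_event (uniform_measure lborel (rect A)) (2 * n)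
      (nat \<lfloor>ln (real n)\<rfloor> - 1) (c * sqrt (A / real n)) (rect_cells A (c * sqrt (A / real n)))"
  have sets: "Inside \<in> events" "Chain \<in> events"
    unfolding Inside_def Chain_def using nodes_in_rect_sets
    by (auto simp: node_space_def rect_cells_def intro!: cell_chain_event_sets)
  have "prob Inside \<le> prob ((Inside - Chain) \<union> Chain)"
    using sets by (intro finite_measure_mono) auto
  also have "\<dots> \<le> prob (Inside - Chain) + prob Chain"
    using sets by (intro measure_Un_le) auto
  finally show ?thesis
    using measure_nodes_in_rect[OF A, of n] measure_node_cell_chain_event[OF A c n]
    by (simp add: sparse_event_def Inside_def Chain_def)
qed

theorem lemma2:
  fixes A c :: real
  assumes "A > 0" and "0 < c" and "c < 1 / (7 * sqrt (exp 1))"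
  shows "\<exists>B. (\<forall>n. B n \<in> sets (node_space A n) \<and>
                 B n \<subseteq> {\<omega> \<in> space (node_space A n). good_config A c n \<omega>}) \<and>
             (\<lambda>n. measure (node_space A n) (B n)) \<longlonglongrightarrow> 1"
proof -
  define B where "B n = (if 2 \<le> n then sparse_event A c n else {})" for n
  have "c < 1"
    using assms(3) by (rule less_one_if_less_inverse_7_sqrt_e)
  have B: "B n \<in> sets (node_space A n) \<and> B n \<subseteq> {\<omega> \<in> space (node_space A n). good_config A c n \<omega>}" for n
    using sparse_event_sets sparse_event_good[OF assms(1,2) \<open>c < 1\<close>] by (simp add: B_def)
  have lim: "(\<lambda>n. 1 - 6 * exp 4 / real n) \<longlonglongrightarrow> 1"
    using tendsto_diff[OF tendsto_const lim_const_over_n[of "6 * exp 4"], of 1] by simp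
  have "(\<lambda>n. measure (node_space A n) (B n)) \<longlonglongrightarrow> 1"
  proof (rule tendsto_sandwich[OF _ _ lim tendsto_const])
    show "\<forall>\<^sub>F n in sequentially. 1 - 6 * exp 4 / real n \<le> measure (node_space A n) (B n)"
      using measure_sparse_event[OF assms] by (intro eventually_sequentiallyI[of 2]) (simp add: B_def)
    have "prob_space (node_space A n)" for n
      unfolding node_space_def by (intro prob_space_PiM prob_space_uniform_rect assms(1))
    then show "\<forall>\<^sub>F n in sequentially. measure (node_space A n) (B n) \<le> 1"
      by (simp add: prob_space.prob_le_1)
  qed
  with B show ?thesis by blast
qed

end
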